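(* For every command $C$, store $\sigma$, real $w\ge 0$, multidistribution $\mu$ on configurations, expectation $f$ and $c\in\{\mathit{true},\mathit{false}\}$: if $\langle C,\sigma\rangle \to_w \mu$ (one step of the probabilistic reduction relation), then \[ e_c(f)(\langle C,\sigma\rangle) \;\ge\; [c]\cdot w + \mathbb{E}_\mu(e_c(f)). \]
   Context: Let $\mathrm{Var}$ be a finite set of integer-valued variables and $\Sigma = \mathrm{Var}\to\mathbb{Z}$ the set of stores; $\sigma[x\mapsto i]$ is the store updated at $x$. Boolean expressions $\varphi$ are evaluated on stores ($\sigma\models\varphi$). A distribution expression $d$ assigns to each store $\sigma$ a probability distribution $d(\sigma)$ on $\mathbb{Z}$. Commands: $C,D ::= \mathtt{skip} \mid \mathtt{tick}(r) \mid \mathtt{halt} \mid x :\approx d \mid \mathtt{if}_{[\psi]}(\varphi)\{C\}\{D\} \mid \mathtt{while}_{[\psi]}(\varphi)\{C\} \mid C \,\square\, D \mid C \oplus_p D \mid C;D$, with $r$ a nonnegative rational, $p\in[0,1]$. Expectations are functions $f:\Sigma\to[0,\infty]$, with pointwise operations, $\mathbf{r}$ the constant $r$, $[\varphi](\sigma)\in\{0,1\}$ the indicator, $[c]=1$ if $c=\mathit{true}$ and $0$ otherwise, $0\cdot\infty=0$. Transformer $\mathsf{et}_c$: $\mathsf{et}_c[\mathtt{skip}](f)=f$; $\mathsf{et}_c[\mathtt{tick}(r)](f)=[c]\cdot\mathbf{r}+f$; $\mathsf{et}_c[\mathtt{halt}](f)=\mathbf{0}$; $\mathsf{et}_c[x:\approx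 d](f)=\lambda\sigma.\sum_{i} d(\sigma)(i)\, f(\sigma[x\mapsto i])$; $\mathsf{et}_c[\mathtt{if}_{[\psi]}(\varphi)\{C\}\{D\}](f)=[\psi\wedge\varphi]\cdot\mathsf{et}_c[C](f)+[\psi\wedge\neg\varphi]\cdot\mathsf{et}_c[D](f)$; $\mathsf{et}_c[\mathtt{while}_{[\psi]}(\varphi)\{C\}](f)=\mathrm{lfp}\,F.\ [\psi\wedge\varphi]\cdot\mathsf{et}_c[C](F)+[\psi\wedge\neg\varphi]\cdot f$ (least fixed point, pointwise order); $\mathsf{et}_c[C\,\square\,D](f)=\max(\mathsf{et}_c[C](f),\mathsf{et}_c[D](f))$; $\mathsf{et}_c[C\oplus_p D](f)=\mathbf{p}\cdot\mathsf{et}_c[C](f)+\mathbf{(1-p)}\cdot\mathsf{et}_c[D](f)$; $\mathsf{et}_c[C;D](f)=\mathsf{et}_c[C](\mathsf{et}_c[D](f))$. Configurations: $\mathrm{Conf}=(\mathrm{Cmd}\times\Sigma)\cup\Sigma\cup\{\bot\}$; an active configuration is written $\langle C,\sigma\rangle$. A multidistribution on a set $A$ is a countable multiset $\mu$ of pairs $q:a$ with $a\in A$, $0<q\le1$, and $\sum_{q:a\in\mu}q\le1$; $\mathbb{E}_\mu(g)=\sum_{q:a\in\mu}q\cdot g(a)$ (with multiplicity). For $h:A\to B$, $\overline h(\{q_i:a_i\}_i)=\{q_i:h(a_i)\}_i$. A configuration $\gamma$ is identified with $\{1:\gamma\}$; entries with probability $0$ are omitted. The one-step relation $\gamma\to_w\mu$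 (with cost $w$) is the least relation closed under: $\langle\mathtt{skip},\sigma\rangle\to_0\sigma$; $\langle\mathtt{tick}(r),\sigma\rangle\to_r\sigma$; $\langle\mathtt{halt},\sigma\rangle\to_0\bot$; $\langle x:\approx d,\sigma\rangle\to_0\{d(\sigma)(i):\sigma[x\mapsto i]\mid i\in\mathbb{Z},d(\sigma)(i)>0\}$; $\langle\mathtt{if}_{[\psi]}(\varphi)\{C\}\{D\},\sigma\rangle\to_0\langle C,\sigma\rangle$ if $\sigma\models\psi\wedge\varphi$, $\to_0\langle D,\sigma\rangle$ if $\sigma\models\psi\wedge\neg\varphi$, $\to_0\bot$ if $\sigma\models\neg\psi$; $\langle\mathtt{while}_{[\psi]}(\varphi)\{C\},\sigma\rangle\to_0\langle C;\mathtt{while}_{[\psi]}(\varphi)\{C\},\sigma\rangle$ if $\sigma\models\psi\wedge\varphi$, $\to_0\sigma$ if $\sigma\models\psi\wedge\neg\varphi$, $\to_0\bot$ if $\sigma\models\neg\psi$; $\langle C\,\square\,D,\sigma\rangle\to_0\langle C,\sigma\rangle$ and $\to_0\langle D,\sigma\rangle$; $\langle C\oplus_pD,\sigma\rangle\to_0\{p:\langle C,\sigma\rangle,1-p:\langle D,\sigma\rangle\}$; if $\langle C,\sigma\rangle\to_r\mu$ then $\langle C;D,\sigma\rangle\to_r\overline{\kappa_D}(\mu)$, where $\kappa_D(\langle C',\sigma'\rangle)=\langle C';D,\sigma'\rangle$, $\kappa_D(\sigma')=\langle D,\sigma'\rangle$, $\kappa_D(\bot)=\bot$. For an expectation $f$,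 $e_c(f):\mathrm{Conf}\to[0,\infty]$ is defined by $e_c(f)(\langle C,\sigma\rangle)=\mathsf{et}_c[C](f)(\sigma)$, $e_c(f)(\sigma)=f(\sigma)$, $e_c(f)(\bot)=0$. *)

theory Defs
  imports "HOL-Analysis.Analysis" "HOL-Probability.Probability"
begin

typedef nnrat = "{r::rat. 0 \<le> r}" by auto
typedef prob = "{p::real. 0 \<le> p \<and> p \<le> 1}" by auto

type_synonym 'v store = "'v \<Rightarrow> int"
type_synonym 'v bexp = "'v store \<Rightarrow> bool"
type_synonym 'v dexp = "'v store \<Rightarrow> int pmf"
type_synonym 'v expect = "'v store \<Rightarrow> ennreal"

datatype 'v cmd =
    Skip
  | Tick nnrat
  | Halt
  | Assign 'v "'v dexp"
  | If "'v bexp" "'v bexp" "'v cmd" "'v cmd"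
  | While "'v bexp" "'v bexp" "'v cmd"
  | NDet "'v cmd" "'v cmd"
  | PChoice prob "'v cmd" "'v cmd"
  | Seq "'v cmd" "'v cmd"

definition rc :: "nnrat \<Rightarrow> real" where "rc r = real_of_rat (Rep_nnrat r)"
definition pr :: "prob \<Rightarrow> real" where "pr p = Rep_prob p"

definition ind :: "bool \<Rightarrow> ennreal" where "ind b = (if b then 1 else 0)"

primrec et :: "bool \<Rightarrow> 'v cmd \<Rightarrow> 'v expect \<Rightarrow> 'v expect" where
  "et c Skip f = f"
| "et c (Tick r) f = (\<lambda>\<sigma>. ind c * ennreal (rc r) + f \<sigma>)"
| "et c Halt f = (\<lambda>\<sigma>. 0)"
| "et c (Assign x d) f = (\<lambda>\<sigma>. \<Sum>\<^sub>\<infinity>i. ennreal (pmf (d \<sigma>) i) * f (\<sigma>(x := i)))"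
| "et c (If \<psi> \<phi> C D) f = (\<lambda>\<sigma>. ind (\<psi> \<sigma> \<and> \<phi> \<sigma>) * et c C f \<sigma> + ind (\<psi> \<sigma> \<and> \<not> \<phi> \<sigma>) * et c D f \<sigma>)"
| "et c (While \<psi> \<phi> C) f =
     lfp (\<lambda>F. \<lambda>\<sigma>. ind (\<psi> \<sigma> \<and> \<phi> \<sigma>) * et c C F \<sigma> + ind (\<psi> \<sigma> \<and> \<not> \<phi> \<sigma>) * f \<sigma>)"
| "et c (NDet C D) f = (\<lambda>\<sigma>. max (et c C f \<sigma>) (et c D f \<sigma>))"
| "et c (PChoice p C D) f = (\<lambda>\<sigma>. ennreal (pr p) * et c C f \<sigma> + ennreal (1 - pr p) * et c D f \<sigma>)"
| "et c (Seq C D) f = et c C (et c D f)"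

datatype 'v conf = Active "'v cmd" "'v store" | Term "'v store" | Bot

text \<open>A multidistribution is represented by its multiplicity function on pairs (q, a).\<close>
type_synonym 'a mdist = "real \<times> 'a \<Rightarrow> nat"

definition is_mdist :: "'a mdist \<Rightarrow> bool" where
  "is_mdist \<mu> \<longleftrightarrow> (\<forall>q a. 0 < \<mu> (q, a) \<longrightarrow> 0 < q \<and> q \<le> 1)
     \<and> countable {x. 0 < \<mu> x}
     \<and> (\<Sum>\<^sub>\<infinity>x. of_nat (\<mu> x) * ennreal (fst x)) \<le> 1"

definition mexp :: "'a mdist \<Rightarrow> ('a \<Rightarrow> ennreal) \<Rightarrow> ennreal" where
  "mexp \<mu> g = (\<Sum>\<^sub>\<infinity>x. of_nat (\<mu> x) * ennreal (fst x) * g (snd x))"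

definition mmap :: "('a \<Rightarrow> 'b) \<Rightarrow> 'a mdist \<Rightarrow> 'b mdist" where
  "mmap h \<mu> = (\<lambda>(q, b). \<Sum>a\<in>{a. h a = b \<and> 0 < \<mu> (q, a)}. \<mu> (q, a))"

definition mpoint :: "'a \<Rightarrow> 'a mdist" where
  "mpoint a = (\<lambda>x. if x = (1, a) then 1 else 0)"

definition mtwo :: "real \<Rightarrow> 'a \<Rightarrow> real \<Rightarrow> 'a \<Rightarrow> 'a mdist" where
  "mtwo p a q b = (\<lambda>x. (if 0 < p \<and> x = (p, a) then 1 else 0) + (if 0 < q \<and> x = (q, b) then 1 else 0))"

definition massign :: "'v store \<Rightarrow> 'v \<Rightarrow> 'v dexp \<Rightarrow> 'v conf mdist" where
  "massign \<sigma> x d = (\<lambda>(q, \<gamma>). if \<exists>i. 0 < pmf (d \<sigma>) i \<and> q = pmf (d \<sigma>) i \<and> \<gamma> = Term (\<sigma>(x := i)) then 1 else 0)"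

fun kappa :: "'v cmd \<Rightarrow> 'v conf \<Rightarrow> 'v conf" where
  "kappa D (Active C' \<sigma>') = Active (Seq C' D) \<sigma>'"
| "kappa D (Term \<sigma>') = Active D \<sigma>'"
| "kappa D Bot = Bot"

inductive step :: "'v cmd \<Rightarrow> 'v store \<Rightarrow> real \<Rightarrow> 'v conf mdist \<Rightarrow> bool" where
  st_skip: "step Skip \<sigma> 0 (mpoint (Term \<sigma>))"
| st_tick: "step (Tick r) \<sigma> (rc r) (mpoint (Term \<sigma>))"
| st_halt: "step Halt \<sigma> 0 (mpoint Bot)"
| st_assign: "step (Assign x d) \<sigma> 0 (massign \<sigma> x d)"
| st_if_t: "\<psi> \<sigma> \<and> \<phi> \<sigma> \<Longrightarrow> step (If \<psi> \<phi> C D) \<sigma> 0 (mpoint (Active C \<sigma>))"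
| st_if_f: "\<psi> \<sigma> \<and> \<not> \<phi> \<sigma> \<Longrightarrow> step (If \<psi> \<phi> C D) \<sigma> 0 (mpoint (Active D \<sigma>))"
| st_if_bot: "\<not> \<psi> \<sigma> \<Longrightarrow> step (If \<psi> \<phi> C D) \<sigma> 0 (mpoint Bot)"
| st_while_t: "\<psi> \<sigma> \<and> \<phi> \<sigma> \<Longrightarrow> step (While \<psi> \<phi> C) \<sigma> 0 (mpoint (Active (Seq C (While \<psi> \<phi> C)) \<sigma>))"
| st_while_f: "\<psi> \<sigma> \<and> \<not> \<phi> \<sigma> \<Longrightarrow> step (While \<psi> \<phi> C) \<sigma> 0 (mpoint (Term \<sigma>))"
| st_while_bot: "\<not> \<psi> \<sigma> \<Longrightarrow> step (While \<psi> \<phi> C) \<sigma> 0 (mpoint Bot)"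
| st_ndet_l: "step (NDet C D) \<sigma> 0 (mpoint (Active C \<sigma>))"
| st_ndet_r: "step (NDet C D) \<sigma> 0 (mpoint (Active D \<sigma>))"
| st_prob: "step (PChoice p C D) \<sigma> 0 (mtwo (pr p) (Active C \<sigma>) (1 - pr p) (Active D \<sigma>))"
| st_seq: "step C \<sigma> r \<mu> \<Longrightarrow> step (Seq C D) \<sigma> r (mmap (kappa D) \<mu>)"

fun ec :: "bool \<Rightarrow> 'v expect \<Rightarrow> 'v conf \<Rightarrow> ennreal" where
  "ec c f (Active C \<sigma>) = et c C f \<sigma>"
| "ec c f (Term \<sigma>) = f \<sigma>"
| "ec c f Bot = 0"

end

theory Submission
  imports Defs
begin

(* Each reduction rule mirrors one defining equation
   of et: for loops one unfolds the least fixed point once, for nondeterministic choice the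
   maximum dominates the chosen branch (the only rule giving a strict inequality), and for
   sequencing the continuation kappa D is injective, so the expectation of the image
   multidistribution is that of the original one against ec c f o kappa D = ec c (et c D f),
   which is exactly the induction hypothesis for the post-expectation et c D f. *)

lemma infsum_delta: "(\<Sum>\<^sub>\<infinity>x. if x = a then v else 0) = v"
  by (subst infsum_cong_neutral[where T = "{a}"]) auto

lemma mexp_mpoint: "mexp (mpoint a) g = g a"
proof -
  have "mexp (mpoint a) g = (\<Sum>\<^sub>\<infinity>x. if x = (1::real, a) then g a else 0)"
    unfolding mexp_def mpoint_def by (rule infsum_cong) auto
  then show ?thesis by (simp add: infsum_delta)
qed

lemma mexp_mtwo:
  assumes "0 \<le> p" "0 \<le> q"
  shows "mexp (mtwo p a q b) g = ennreal p * g a + ennreal q * g b"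
proof -
  have "mexp (mtwo p a q b) g = (\<Sum>\<^sub>\<infinity>x. (if x = (p, a) then (if 0 < p then ennreal p * g a else 0) else 0)
      + (if x = (q, b) then (if 0 < q then ennreal q * g b else 0) else 0))"
    unfolding mexp_def mtwo_def by (rule infsum_cong) (auto simp: algebra_simps)
  also have "\<dots> = (if 0 < p then ennreal p * g a else 0) + (if 0 < q then ennreal q * g b else 0)"
    by (subst infsum_add) (auto simp: infsum_delta nonneg_summable_on_complete)
  also have "\<dots> = ennreal p * g a + ennreal q * g b"
    using assms by auto
  finally show ?thesis .
qed

lemma mexp_mmap:
  assumes "inj h"
  shows "mexp (mmap h \<mu>) g = mexp \<mu> (g \<circ> h)"
proof -
  define H where "H = (\<lambda>(q::real, a). (q, h a))"
  have "inj H" using assms unfolding H_def inj_def by auto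
  have mmap_image: "mmap h \<mu> (q, h a) = \<mu> (q, a)" for q a
  proof -
    have "{a'. h a' = h a \<and> 0 < \<mu> (q, a')} = (if 0 < \<mu> (q, a) then {a} else {})"
      using assms by (auto simp: inj_def)
    then show ?thesis unfolding mmap_def by simp
  qed
  have mmap_outside_range: "mmap h \<mu> (q, b) = 0" if "b \<notin> range h" for q b
  proof -
    have "{a. h a = b \<and> 0 < \<mu> (q, a)} = {}" using that by auto
    then show ?thesis unfolding mmap_def by simp
  qed
  have "mexp (mmap h \<mu>) g = infsum (\<lambda>x. of_nat (mmap h \<mu> x) * ennreal (fst x) * g (snd x)) (range H)"
    unfolding mexp_def
  proof (rule infsum_cong_neutral)
    fix x assume "x \<in> UNIV - range H"
    then obtain q b where "x = (q, b)" "b \<notin> range h"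
      unfolding H_def by (cases x) (auto simp: image_iff)
    then show "of_nat (mmap h \<mu> x) * ennreal (fst x) * g (snd x) = 0"
      using mmap_outside_range by simp
  qed auto
  also have "\<dots> = infsum ((\<lambda>x. of_nat (mmap h \<mu> x) * ennreal (fst x) * g (snd x)) \<circ> H) UNIV"
    using \<open>inj H\<close> by (simp add: infsum_reindex)
  also have "\<dots> = mexp \<mu> (g \<circ> h)"
    unfolding mexp_def by (rule infsum_cong) (auto simp: H_def mmap_image)
  finally show ?thesis .
qed

lemma mexp_massign:
  "mexp (massign \<sigma> x d) g = (\<Sum>\<^sub>\<infinity>i. ennreal (pmf (d \<sigma>) i) * g (Term (\<sigma>(x := i))))"
proof -
  define H where "H = (\<lambda>i. (pmf (d \<sigma>) i, Term (\<sigma>(x := i))))"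
  define S where "S = {i. 0 < pmf (d \<sigma>) i}"
  have "inj H"
  proof (rule injI)
    fix i j assume "H i = H j"
    then have "(\<sigma>(x := i)) x = (\<sigma>(x := j)) x" unfolding H_def by simp
    then show "i = j" by simp
  qed
  have massign_image: "massign \<sigma> x d (H i) = 1" if "i \<in> S" for i
    using that unfolding massign_def H_def S_def by auto
  have massign_outside_image: "massign \<sigma> x d y = 0" if "y \<notin> H ` S" for y
    using that unfolding massign_def H_def S_def by (cases y) (auto simp: image_iff)
  have "mexp (massign \<sigma> x d) g = infsum (\<lambda>y. of_nat (massign \<sigma> x d y) * ennreal (fst y) * g (snd y)) (H ` S)"
    unfolding mexp_def by (rule infsum_cong_neutral) (auto simp: massign_outside_image)
  also have "\<dots> = infsum ((\<lambda>y. of_nat (massign \<sigma> x d y) * ennreal (fst y) * g (snd y)) \<circ> H) S"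
    using \<open>inj H\<close> by (auto intro: infsum_reindex inj_on_subset)
  also have "\<dots> = (\<Sum>\<^sub>\<infinity>i. ennreal (pmf (d \<sigma>) i) * g (Term (\<sigma>(x := i))))"
  proof (rule infsum_cong_neutral)
    fix i assume "i \<in> UNIV - S"
    then have "pmf (d \<sigma>) i = 0" unfolding S_def using pmf_nonneg[of "d \<sigma>" i] by auto
    then show "ennreal (pmf (d \<sigma>) i) * g (Term (\<sigma>(x := i))) = 0" by simp
  next
    fix i assume "i \<in> S \<inter> UNIV"
    then show "((\<lambda>y. of_nat (massign \<sigma> x d y) * ennreal (fst y) * g (snd y)) \<circ> H) i
       = ennreal (pmf (d \<sigma>) i) * g (Term (\<sigma>(x := i)))"
      using massign_image[of i] by (simp add: H_def)
  qed auto
  finally show ?thesis .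
qed

lemma mono_et: "mono (et c C)"
proof (induction C)
  case (Assign x d)
  show ?case
    by (auto intro!: monoI le_funI infsum_mono mult_left_mono
        simp: nonneg_summable_on_complete dest: le_funD)
next
  case (While \<psi> \<phi> C)
  show ?case
  proof (rule monoI)
    fix f g :: "'a expect" assume "f \<le> g"
    then show "et c (While \<psi> \<phi> C) f \<le> et c (While \<psi> \<phi> C) g"
      unfolding et.simps
      by (intro lfp_mono) (auto intro!: le_funI add_mono mult_left_mono dest: le_funD)
  qed
next
  case (NDet C D)
  then show ?case
    by (auto intro!: monoI le_funI max.mono dest: le_funD monoD)
qed (auto intro!: monoI le_funI add_mono mult_left_mono dest: le_funD monoD)

lemma et_While_unfold:
  "et c (While \<psi> \<phi> C) f \<sigma> = ind (\<psi> \<sigma> \<and> \<phi> \<sigma>) * et c C (et c (While \<psi> \<phi> C) f) \<sigma>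
      + ind (\<psi> \<sigma> \<and> \<not> \<phi> \<sigma>) * f \<sigma>"
proof -
  have "mono (\<lambda>F \<sigma>. ind (\<psi> \<sigma> \<and> \<phi> \<sigma>) * et c C F \<sigma> + ind (\<psi> \<sigma> \<and> \<not> \<phi> \<sigma>) * f \<sigma>)"
    using mono_et[of c C]
    by (auto intro!: monoI le_funI add_mono mult_left_mono dest: le_funD monoD)
  then show ?thesis
    by (simp only: et.simps) (rule fun_cong[OF lfp_unfold])
qed

lemma inj_kappa: "inj (kappa D)"
proof (rule injI)
  fix x y assume "kappa D x = kappa D y"
  then show "x = y"
    by (cases x; cases y) (auto dest: arg_cong[of _ _ size])
qed

lemma ec_comp_kappa: "ec c f \<circ> kappa D = ec c (et c D f)"
proof
  fix x show "(ec c f \<circ> kappa D) x = ec c (et c D f) x" by (cases x) auto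
qed

lemma step_ec_lower_bound:
  assumes "step C \<sigma> w \<mu>"
  shows "ind c * ennreal w + mexp \<mu> (ec c f) \<le> ec c f (Active C \<sigma>)"
  using assms
proof (induction arbitrary: f)
  case (st_assign \<sigma> x d)
  show ?case by (simp add: mexp_massign)
next
  case (st_while_t \<psi> \<sigma> \<phi> C)
  then show ?case using et_While_unfold[of c \<psi> \<phi> C f \<sigma>] by (simp add: mexp_mpoint ind_def)
next
  case (st_while_f \<psi> \<sigma> \<phi> C)
  then show ?case using et_While_unfold[of c \<psi> \<phi> C f \<sigma>] by (simp add: mexp_mpoint ind_def)
next
  case (st_prob p C \<sigma> D)
  have "0 \<le> pr p" "pr p \<le> 1" using Rep_prob[of p] by (auto simp: pr_def)
  then show ?case by (simp add: mexp_mtwo)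
next
  case (st_seq C \<sigma> r \<mu> D)
  show ?case using st_seq.IH[of "et c D f"]
    by (simp add: mexp_mmap inj_kappa ec_comp_kappa)
qed (auto simp: mexp_mpoint ind_def)

theorem mainTheorem3:
  fixes C :: "'v::finite cmd" and \<sigma> :: "'v store" and w :: real
    and \<mu> :: "'v conf mdist" and f :: "'v expect" and c :: bool
  assumes "0 \<le> w" and "is_mdist \<mu>" and "step C \<sigma> w \<mu>"
  shows "ec c f (Active C \<sigma>) \<ge> ind c * ennreal w + mexp \<mu> (ec c f)"
  using step_ec_lower_bound[OF assms(3)] .

end
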